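(* Let $\tilde n$ be a set of names and $\mathtt{s}\in\tilde n$. Let $M$ be a ground term public with respect to $\tilde n$, and let $U,V$ be terms such that for every occurrence $q_{\mathtt{s}}$ of $\mathtt{s}$ in $U$ (respectively in $V$) there is an encryption occurrence $q_{\mathsf{enc}}$ in $U$ (respectively in $V$) with $q_{\mathsf{enc}}\cdot1\le q_{\mathtt{s}}$ which is an agent encryption with respect to $\tilde n\setminus\{\mathtt{s}\}$ and a probabilistic encryption with respect to $\{U,V\}$. Then $U[\mathtt{s}/M]=V[\mathtt{s}/M]$ (syntactic equality) implies $U=V$.
   Context: Terms are built over function symbols including $\mathsf{enc}$ and $\mathsf{enca}$ (arity 3) and $\mathsf{priv}$, constants, names and variables. A term is public w.r.t. a set of names $\tilde n$ if it contains no name of $\tilde n$ and no symbol $\mathsf{priv}$. Positions are sequences of positive integers ordered by prefix $\le$; $T|_p$ is the subterm at $p$; $T[\mathtt{s}/M]$ replaces every occurrence of the name $\mathtt{s}$ by $M$. An encryption occurrence in $U$ is a position $q$ where the head of $U|_q$ is $\mathsf{enc}$ or $\mathsf{enca}$; it is an agent encryption w.r.t. a set of names $\tilde m$ if $U|_{q\cdot3}\in\tilde m$; it is a probabilistic encryption w.r.t. a set of terms $S$ if for all $W\in S$ and positions $p$ with $W|_p=U|_{q\cdot3}$ we have $p=q'\cdot3$ for some $q'$ with $W|_{q'}=U|_q$. *)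

theory Defs
  imports Main "HOL-Library.Sublist"
begin

datatype 'f sym = Enc | Enca | Priv | F 'f

datatype ('f, 'c, 'n, 'v) trm =
    Var 'v | Nm 'n | Cst 'c | Fun "'f sym" "('f, 'c, 'n, 'v) trm list"

fun sym_arity :: "('f \<Rightarrow> nat) \<Rightarrow> 'f sym \<Rightarrow> nat" where
  "sym_arity ar Enc = 3"
| "sym_arity ar Enca = 3"
| "sym_arity ar Priv = 1"
| "sym_arity ar (F f) = ar f"

fun wf_trm :: "('f \<Rightarrow> nat) \<Rightarrow> ('f, 'c, 'n, 'v) trm \<Rightarrow> bool" where
  "wf_trm ar (Fun g ts) = (length ts = sym_arity ar g \<and> (\<forall>t\<in>set ts. wf_trm ar t))"
| "wf_trm ar _ = True"

fun vars_of :: "('f, 'c, 'n, 'v) trm \<Rightarrow> 'v set" where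
  "vars_of (Var x) = {x}"
| "vars_of (Fun g ts) = (\<Union>t\<in>set ts. vars_of t)"
| "vars_of _ = {}"

fun names_of :: "('f, 'c, 'n, 'v) trm \<Rightarrow> 'n set" where
  "names_of (Nm a) = {a}"
| "names_of (Fun g ts) = (\<Union>t\<in>set ts. names_of t)"
| "names_of _ = {}"

fun syms_of :: "('f, 'c, 'n, 'v) trm \<Rightarrow> 'f sym set" where
  "syms_of (Fun g ts) = insert g (\<Union>t\<in>set ts. syms_of t)"
| "syms_of _ = {}"

definition ground :: "('f, 'c, 'n, 'v) trm \<Rightarrow> bool" where
  "ground T \<longleftrightarrow> vars_of T = {}"

definition public :: "'n set \<Rightarrow> ('f, 'c, 'n, 'v) trm \<Rightarrow> bool" where
  "public N T \<longleftrightarrow> names_of T \<inter> N = {} \<and> Priv \<notin> syms_of T"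

text \<open>Positions are lists of positive integers (arguments indexed from 1);
  subterm at a position (None if the position does not exist).\<close>
fun subt :: "('f, 'c, 'n, 'v) trm \<Rightarrow> nat list \<Rightarrow> ('f, 'c, 'n, 'v) trm option" where
  "subt T [] = Some T"
| "subt (Fun g ts) (i # p) = (if 1 \<le> i \<and> i \<le> length ts then subt (ts ! (i - 1)) p else None)"
| "subt _ (_ # _) = None"

fun repl :: "'n \<Rightarrow> ('f, 'c, 'n, 'v) trm \<Rightarrow> ('f, 'c, 'n, 'v) trm \<Rightarrow> ('f, 'c, 'n, 'v) trm" where
  "repl s M (Nm a) = (if a = s then M else Nm a)"
| "repl s M (Fun g ts) = Fun g (map (repl s M) ts)"
| "repl s M T = T"

definition enc_occ :: "('f, 'c, 'n, 'v) trm \<Rightarrow> nat list \<Rightarrow> bool" where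
  "enc_occ U q \<longleftrightarrow> (\<exists>g ts. subt U q = Some (Fun g ts) \<and> (g = Enc \<or> g = Enca))"

definition agent_enc :: "('f, 'c, 'n, 'v) trm \<Rightarrow> nat list \<Rightarrow> 'n set \<Rightarrow> bool" where
  "agent_enc U q N \<longleftrightarrow> (\<exists>k. subt U (q @ [3]) = Some (Nm k) \<and> k \<in> N)"

definition prob_enc :: "('f, 'c, 'n, 'v) trm \<Rightarrow> nat list \<Rightarrow> ('f, 'c, 'n, 'v) trm set \<Rightarrow> bool" where
  "prob_enc U q S \<longleftrightarrow>
     (\<forall>W\<in>S. \<forall>p. subt W p = subt U (q @ [3]) \<longrightarrow>
        (\<exists>q'. p = q' @ [3] \<and> subt W q' = subt U q))"

end

theory Submission
  imports Defs
begin

text \<open>An occurrence of \<open>s\<close> in \<open>U\<close> lies under an encryption whose key is a secret name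
  \<open>k \<noteq> s\<close>. Replacing \<open>s\<close> by the public term \<open>M\<close> cannot create or destroy an occurrence
  of \<open>k\<close>, so \<open>V\<close> carries the same key at the same position, and probabilistic encryption
  forces the whole encryption subterm of \<open>V\<close> there to be the one of \<open>U\<close>. Hence \<open>U\<close> and
  \<open>V\<close> have the same occurrences of \<open>s\<close>, and on such pairs of terms the replacement is
  injective.\<close>

lemma subt_append:
  "subt T (p @ q) = (case subt T p of None \<Rightarrow> None | Some t \<Rightarrow> subt t q)"
proof (induction p arbitrary: T)
  case Nil then show ?case by simp
next
  case (Cons i p) then show ?case by (cases T) auto
qed

lemma subt_prefix_cong:
  assumes "prefix q p" and "subt V q = subt U q"
  shows "subt V p = subt U p"
  using assms by (auto simp: prefix_def subt_append)

lemma subt_repl: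
  "subt T q = Some t \<Longrightarrow> subt (repl s M T) q = Some (repl s M t)"
proof (induction q arbitrary: T)
  case Nil then show ?case by simp
next
  case (Cons i q) then show ?case by (cases T) (auto split: if_splits)
qed

lemma names_of_subt: "subt T q = Some (Nm k) \<Longrightarrow> k \<in> names_of T"
proof (induction q arbitrary: T)
  case Nil then show ?case by simp
next
  case (Cons i q) then show ?case
    by (cases T) (auto split: if_splits intro!: bexI nth_mem)
qed

lemma subt_repl_NmD:
  assumes "subt (repl s M T) q = Some (Nm k)" and "k \<noteq> s" and "k \<notin> names_of M"
  shows "subt T q = Some (Nm k)"
  using assms(1)
proof (induction q arbitrary: T)
  case Nil then show ?case
    using assms(2,3) by (cases T) (auto split: if_splits)
next
  case (Cons i q) then show ?case
    using assms(3) names_of_subt[of M] by (cases T) (auto split: if_splits)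
qed

lemma subt_repl_eq_under_agent_prob_enc:
  assumes "agent_enc U qe (N - {s})" and "prob_enc U qe S" and "V \<in> S"
    and "public N M" and "repl s M U = repl s M V"
  shows "subt V qe = subt U qe"
proof -
  obtain k where key: "subt U (qe @ [3]) = Some (Nm k)" and "k \<in> N" "k \<noteq> s"
    using assms(1) unfolding agent_enc_def by auto
  then have "k \<notin> names_of M"
    using assms(4) unfolding public_def by auto
  moreover have "subt (repl s M V) (qe @ [3]) = Some (Nm k)"
    using subt_repl[OF key, of s M] \<open>k \<noteq> s\<close> assms(5) by simp
  ultimately have "subt V (qe @ [3]) = Some (Nm k)"
    using subt_repl_NmD \<open>k \<noteq> s\<close> by metis
  then obtain q' where "qe @ [3] = q' @ [3]" and "subt V q' = subt U qe"
    using assms(2,3) key unfolding prob_enc_def by metis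
  then show ?thesis by simp
qed

lemma repl_inj_on_same_occurrences:
  assumes "\<And>p. subt U p = Some (Nm s) \<longleftrightarrow> subt V p = Some (Nm s)"
    and "repl s M U = repl s M V"
  shows "U = V"
  using assms
proof (induction U arbitrary: V)
  case (Fun g ts)
  have "V \<noteq> Nm s"
    using Fun.prems(1)[of "[]"] by auto
  with Fun.prems(2) obtain ts' where V: "V = Fun g ts'"
    and reprs: "map (repl s M) ts = map (repl s M) ts'"
    by (cases V) (auto split: if_splits)
  have "ts ! j = ts' ! j" if j: "j < length ts" for j
  proof (rule Fun.IH)
    show "ts ! j \<in> set ts" using j by simp
    have "length ts' = length ts" using reprs by (metis length_map)
    then show "subt (ts ! j) p = Some (Nm s) \<longleftrightarrow> subt (ts' ! j) p = Some (Nm s)" for p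
      using Fun.prems(1)[of "Suc j # p"] j V by simp
    show "repl s M (ts ! j) = repl s M (ts' ! j)"
      using reprs j by (metis length_map nth_map)
  qed
  then show ?case
    using V reprs by (metis length_map nth_equalityI)
next
  case (Nm a)
  then show ?case
    using Nm.prems(1)[of "[]"] by (cases V) (auto split: if_splits)
next
  case (Var x)
  then show ?case
    using Var.prems(1)[of "[]"] by (cases V) (auto split: if_splits)
next
  case (Cst c)
  then show ?case
    using Cst.prems(1)[of "[]"] by (cases V) (auto split: if_splits)
qed

theorem lemma2p13:
  fixes ar :: "'f \<Rightarrow> nat"
    and N :: "'n set" and s :: 'n
    and M U V :: "('f, 'c, 'n, 'v) trm"
  assumes "s \<in> N"
    and "wf_trm ar M" "wf_trm ar U" "wf_trm ar V"
    and "ground M" and "public N M"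
    and "\<forall>qs. subt U qs = Some (Nm s) \<longrightarrow>
           (\<exists>qe. enc_occ U qe \<and> prefix (qe @ [1]) qs \<and>
                 agent_enc U qe (N - {s}) \<and> prob_enc U qe {U, V})"
    and "\<forall>qs. subt V qs = Some (Nm s) \<longrightarrow>
           (\<exists>qe. enc_occ V qe \<and> prefix (qe @ [1]) qs \<and>
                 agent_enc V qe (N - {s}) \<and> prob_enc V qe {U, V})"
  shows "repl s M U = repl s M V \<longrightarrow> U = V"
proof
  assume eq: "repl s M U = repl s M V"
  have transfer: "subt T' p = Some (Nm s)"
    if occ: "subt T p = Some (Nm s)" and T': "T' \<in> {U, V}"
      and protected: "\<forall>qs. subt T qs = Some (Nm s) \<longrightarrow>
           (\<exists>qe. enc_occ T qe \<and> prefix (qe @ [1]) qs \<and>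
                 agent_enc T qe (N - {s}) \<and> prob_enc T qe {U, V})"
      and eq': "repl s M T = repl s M T'"
    for T T' p
  proof -
    obtain qe where "prefix (qe @ [1]) p" "agent_enc T qe (N - {s})" "prob_enc T qe {U, V}"
      using occ protected by blast
    with subt_repl_eq_under_agent_prob_enc[OF _ _ T' assms(6) eq']
    show ?thesis
      using occ subt_prefix_cong append_prefixD by metis
  qed
  show "U = V"
  proof (rule repl_inj_on_same_occurrences[OF _ eq])
    show "subt U p = Some (Nm s) \<longleftrightarrow> subt V p = Some (Nm s)" for p
      using transfer[of U p V] transfer[of V p U] assms(7,8) eq by auto
  qed
qed

end
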